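(* In an ado-semilattice $(S,\sqcup,\cap)$, for all $a,b,c,d\in S$: (1) if $d\lesssim a\cap b$ and $d\lesssim b\cap c$ then $d\lesssim a\cap c$; (2) if $d\lesssim a$, $d\lesssim b$ and $d\lesssim a\curlyvee b$ then $d\lesssim a\cap b$.
   Context: An o-semilattice is an algebra $(L,\cap,\sqcup)$ such that $(L,\cap)$ is a semilattice and, with $x\leq y$ iff $x=x\cap y$, for all $x,y,z$: (i) $x\leq x\sqcup y$; (ii) $(x\cap y)\sqcup(y\cap z)\leq y$; (iii) $x\sqcup y\leq x\sqcup(y\cap(x\sqcup y))$; (iv) $x\cap z\leq(x\cap y)\sqcup z$. It is distributive if $(a\cap d)\sqcup((b\cap d)\cap(c\cap d))=((a\cap d)\sqcup(b\cap d))\cap((a\cap d)\sqcup(c\cap d))$ for all $a,b,c,d$. An ado-semilattice is a distributive o-semilattice in which $\sqcup$ is associative. In an ado-semilattice, $x\lesssim y$ means $y\sqcup x=y$, and $a\curlyvee b$ is defined as $(a\sqcup b)\cap(b\sqcup a)$. *)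

theory Defs
  imports Main
begin

definition semilattice_op :: "('a \<Rightarrow> 'a \<Rightarrow> 'a) \<Rightarrow> bool" where
  "semilattice_op m \<longleftrightarrow>
     (\<forall>x y z. m (m x y) z = m x (m y z)) \<and>
     (\<forall>x y. m x y = m y x) \<and>
     (\<forall>x. m x x = x)"

definition sle :: "('a \<Rightarrow> 'a \<Rightarrow> 'a) \<Rightarrow> 'a \<Rightarrow> 'a \<Rightarrow> bool" where
  "sle m x y \<longleftrightarrow> x = m x y"

definition o_semilattice :: "('a \<Rightarrow> 'a \<Rightarrow> 'a) \<Rightarrow> ('a \<Rightarrow> 'a \<Rightarrow> 'a) \<Rightarrow> bool" where
  "o_semilattice m j \<longleftrightarrow> semilattice_op m \<and>
     (\<forall>x y. sle m x (j x y)) \<and>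
     (\<forall>x y z. sle m (j (m x y) (m y z)) y) \<and>
     (\<forall>x y. sle m (j x y) (j x (m y (j x y)))) \<and>
     (\<forall>x y z. sle m (m x z) (j (m x y) z))"

definition distributive_os :: "('a \<Rightarrow> 'a \<Rightarrow> 'a) \<Rightarrow> ('a \<Rightarrow> 'a \<Rightarrow> 'a) \<Rightarrow> bool" where
  "distributive_os m j \<longleftrightarrow> o_semilattice m j \<and>
     (\<forall>a b c d. j (m a d) (m (m b d) (m c d)) = m (j (m a d) (m b d)) (j (m a d) (m c d)))"

definition ado_semilattice :: "('a \<Rightarrow> 'a \<Rightarrow> 'a) \<Rightarrow> ('a \<Rightarrow> 'a \<Rightarrow> 'a) \<Rightarrow> bool" where
  "ado_semilattice m j \<longleftrightarrow> distributive_os m j \<and> (\<forall>x y z. j (j x y) z = j x (j y z))"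

definition lesssim :: "('a \<Rightarrow> 'a \<Rightarrow> 'a) \<Rightarrow> 'a \<Rightarrow> 'a \<Rightarrow> bool" where
  "lesssim j x y \<longleftrightarrow> j y x = y"

definition cvee :: "('a \<Rightarrow> 'a \<Rightarrow> 'a) \<Rightarrow> ('a \<Rightarrow> 'a \<Rightarrow> 'a) \<Rightarrow> 'a \<Rightarrow> 'a \<Rightarrow> 'a" where
  "cvee m j a b = m (j a b) (j b a)"

end

theory Submission
  imports Defs
begin

text \<open>
  Everything rests on one closure property: if x and y have a common upper bound
  then d \<lesssim> x and d \<lesssim> y imply d \<lesssim> x \<sqinter> y. Below a common
  bound, join is commutative and distributes over meet. Put u = d \<squnion> y and
  v = u \<sqinter> (x \<squnion> y); axiom (iii) gives x \<squnion> v = x \<squnion> y, axiom (iv) gives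
  v \<sqsubseteq> y, so v \<squnion> (x \<sqinter> y) = (x \<squnion> y) \<sqinter> y = y, and associativity of
  join turns this into (x \<sqinter> y) \<squnion> d \<sqsubseteq> y; by symmetry
  (x \<sqinter> y) \<squnion> d \<sqsubseteq> x \<sqinter> y.

  Part (1) applies this to a \<sqinter> b and b \<sqinter> c, both below b, whose meet lies
  below a \<sqinter> c. Part (2) applies it to a \<sqinter> u and b \<sqinter> u for
  u = a \<curlyvee> b, and then to their meet, which is a \<sqinter> b.
\<close>

locale ado_algebra =
  fixes meet :: "'a \<Rightarrow> 'a \<Rightarrow> 'a"  (infixl \<open>\<sqinter>\<close> 70)
    and join :: "'a \<Rightarrow> 'a \<Rightarrow> 'a"  (infixl \<open>\<squnion>\<close> 65)
  assumes ado: "ado_semilattice meet join"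
begin

abbreviation below :: "'a \<Rightarrow> 'a \<Rightarrow> bool"  (infix \<open>\<sqsubseteq>\<close> 50)
  where "x \<sqsubseteq> y \<equiv> sle meet x y"

abbreviation join_below :: "'a \<Rightarrow> 'a \<Rightarrow> bool"  (infix \<open>\<lesssim>\<close> 50)
  where "x \<lesssim> y \<equiv> lesssim join x y"

lemma meet_semilattice: "semilattice meet"
  and join_upper: "x \<sqsubseteq> x \<squnion> y"
  and join_meet_below: "(x \<sqinter> y) \<squnion> (y \<sqinter> z) \<sqsubseteq> y"
  and join_below_join_meet: "x \<squnion> y \<sqsubseteq> x \<squnion> (y \<sqinter> (x \<squnion> y))"
  and meet_below_join_meet: "x \<sqinter> z \<sqsubseteq> (x \<sqinter> y) \<squnion> z"
  and join_meet_distrib: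
    "(a \<sqinter> d) \<squnion> ((b \<sqinter> d) \<sqinter> (c \<sqinter> d)) = ((a \<sqinter> d) \<squnion> (b \<sqinter> d)) \<sqinter> ((a \<sqinter> d) \<squnion> (c \<sqinter> d))"
  and join_assoc: "(x \<squnion> y) \<squnion> z = x \<squnion> (y \<squnion> z)"
  using ado unfolding ado_semilattice_def distributive_os_def o_semilattice_def
    semilattice_op_def by (auto intro!: semilattice.intro abel_semigroup.intro
      semigroup.intro abel_semigroup_axioms.intro semilattice_axioms.intro)

sublocale meet: semilattice_order meet below "\<lambda>x y. x \<sqsubseteq> y \<and> x \<noteq> y"
  by (intro semilattice_order.intro meet_semilattice semilattice_order_axioms.intro)
    (simp_all add: sle_def)

lemma join_absorb1: "y \<sqsubseteq> x \<Longrightarrow> x \<squnion> y = x"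
  using join_meet_below[of x x y] join_upper[of x y] by (simp add: meet.absorb2 meet.antisym)

lemma join_absorb2: "x \<sqsubseteq> y \<Longrightarrow> x \<squnion> y = y"
  using join_meet_below[of x y y] meet_below_join_meet[of y y x]
  by (simp add: meet.absorb1 meet.absorb2 meet.antisym)

lemma join_idem: "x \<squnion> x = x"
  by (simp add: join_absorb1 meet.refl)

lemma join_least: "x \<sqsubseteq> b \<Longrightarrow> y \<sqsubseteq> b \<Longrightarrow> x \<squnion> y \<sqsubseteq> b"
  using join_meet_below[of x b y] by (simp add: meet.absorb1 meet.absorb2)

lemma join_upper2_bounded: "x \<sqsubseteq> b \<Longrightarrow> y \<sqsubseteq> b \<Longrightarrow> y \<sqsubseteq> x \<squnion> y"
  using meet_below_join_meet[of b y x] by (simp add: meet.absorb1 meet.absorb2)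

lemma join_commute_bounded: "x \<sqsubseteq> b \<Longrightarrow> y \<sqsubseteq> b \<Longrightarrow> x \<squnion> y = y \<squnion> x"
  by (metis join_absorb1 join_absorb2 join_assoc join_upper join_upper2_bounded)

lemma join_meet_distrib_bounded:
  assumes "x \<sqsubseteq> b" "y \<sqsubseteq> b" "z \<sqsubseteq> b"
  shows "x \<squnion> (y \<sqinter> z) = (x \<squnion> y) \<sqinter> (x \<squnion> z)"
  using join_meet_distrib[of x b y z] assms by (simp add: meet.absorb1)

lemma lesssim_if_below: "x \<sqsubseteq> y \<Longrightarrow> x \<lesssim> y"
  by (simp add: lesssim_def join_absorb1)

lemma lesssim_trans: "x \<lesssim> y \<Longrightarrow> y \<lesssim> z \<Longrightarrow> x \<lesssim> z"
  unfolding lesssim_def by (metis join_assoc)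

lemma meet_join_below_right:
  assumes "x \<sqsubseteq> b" "y \<sqsubseteq> b" "d \<lesssim> x" "d \<lesssim> y"
  shows "(x \<sqinter> y) \<squnion> d \<sqsubseteq> y"
proof -
  define s where "s = x \<squnion> y"
  define u where "u = d \<squnion> y"
  define v where "v = u \<sqinter> s"
  have xu: "x \<squnion> u = s"
    using \<open>d \<lesssim> x\<close> by (simp add: lesssim_def s_def u_def flip: join_assoc)
  have yu: "y \<squnion> u = y"
    using \<open>d \<lesssim> y\<close> by (simp add: lesssim_def u_def join_idem flip: join_assoc)
  have "x \<squnion> v = s"
  proof (rule meet.antisym)
    show "s \<sqsubseteq> x \<squnion> v"
      using join_below_join_meet[of x u] by (simp add: xu v_def)
    show "x \<squnion> v \<sqsubseteq> s"
      by (simp add: join_least join_upper s_def v_def)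
  qed
  have ys: "y \<sqsubseteq> s"
    using assms(1,2) by (simp add: join_upper2_bounded s_def)
  have vy: "v \<sqsubseteq> y"
    using meet_below_join_meet[of s u y] ys by (simp add: meet.absorb2 yu v_def meet.commute)
  have vb: "v \<sqsubseteq> b"
    using vy assms(2) by (rule meet.trans)
  have "v \<squnion> (x \<sqinter> y) = (v \<squnion> x) \<sqinter> (v \<squnion> y)"
    by (rule join_meet_distrib_bounded[OF vb assms(1,2)])
  also have "\<dots> = s \<sqinter> y"
    using join_commute_bounded[OF vb assms(1)] \<open>x \<squnion> v = s\<close> join_absorb2[OF vy] by simp
  also have "\<dots> = y"
    using ys by (simp add: meet.absorb2)
  finally have xyv: "(x \<sqinter> y) \<squnion> v = y"
    using join_commute_bounded[OF vb meet.coboundedI1[OF assms(1)]] by simp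
  have "(x \<sqinter> y) \<squnion> u = ((x \<sqinter> y) \<squnion> v) \<squnion> u"
    by (simp add: join_assoc join_absorb2 v_def)
  also have "\<dots> = y"
    using xyv yu by simp
  finally have "(x \<sqinter> y) \<squnion> u = y" .
  then have "((x \<sqinter> y) \<squnion> d) \<squnion> y = y"
    by (simp add: join_assoc u_def)
  then show ?thesis
    using join_upper[of "(x \<sqinter> y) \<squnion> d" y] by simp
qed

lemma lesssim_meet_bounded:
  assumes "x \<sqsubseteq> b" "y \<sqsubseteq> b" "d \<lesssim> x" "d \<lesssim> y"
  shows "d \<lesssim> x \<sqinter> y"
proof -
  have "(x \<sqinter> y) \<squnion> d \<sqsubseteq> x \<sqinter> y"
    using meet_join_below_right[OF assms] meet_join_below_right[OF assms(2,1,4,3)]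
    by (simp add: meet.commute)
  then show ?thesis
    unfolding lesssim_def using join_upper meet.antisym by blast
qed

lemma lesssim_meet_trans:
  assumes "d \<lesssim> a \<sqinter> b" "d \<lesssim> b \<sqinter> c"
  shows "d \<lesssim> a \<sqinter> c"
proof -
  have "d \<lesssim> (a \<sqinter> b) \<sqinter> (b \<sqinter> c)"
    using lesssim_meet_bounded[OF meet.cobounded2 meet.cobounded1 assms] .
  moreover have "(a \<sqinter> b) \<sqinter> (b \<sqinter> c) \<sqsubseteq> a \<sqinter> c"
    by (simp add: meet.coboundedI1 meet.coboundedI2)
  ultimately show ?thesis
    using lesssim_if_below lesssim_trans by blast
qed

lemma lesssim_meet_if_lesssim_cvee:
  assumes "d \<lesssim> a" "d \<lesssim> b" "d \<lesssim> cvee meet join a b"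
  shows "d \<lesssim> a \<sqinter> b"
proof -
  define u where "u = cvee meet join a b"
  have "u \<sqsubseteq> a \<squnion> b" "u \<sqsubseteq> b \<squnion> a"
    by (simp_all add: u_def cvee_def)
  then have "d \<lesssim> a \<sqinter> u" "d \<lesssim> b \<sqinter> u"
    using lesssim_meet_bounded[OF join_upper _ assms(1)]
      lesssim_meet_bounded[OF join_upper _ assms(2)] assms(3)
    by (simp_all add: u_def)
  then have "d \<lesssim> (a \<sqinter> u) \<sqinter> (b \<sqinter> u)"
    by (rule lesssim_meet_bounded[OF meet.cobounded2 meet.cobounded2])
  moreover have "a \<sqinter> b \<sqsubseteq> u"
    by (simp add: u_def cvee_def meet.coboundedI1 meet.coboundedI2 join_upper)
  then have "(a \<sqinter> u) \<sqinter> (b \<sqinter> u) = a \<sqinter> b"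
    by (metis meet.absorb1 meet.assoc meet.commute meet.left_idem)
  ultimately show ?thesis
    by simp
qed

end

theorem lemma3p6:
  fixes meet join :: "'a \<Rightarrow> 'a \<Rightarrow> 'a"
  assumes "ado_semilattice meet join"
  shows "(\<forall>a b c d. lesssim join d (meet a b) \<and> lesssim join d (meet b c)
           \<longrightarrow> lesssim join d (meet a c)) \<and>
         (\<forall>a b d. lesssim join d a \<and> lesssim join d b \<and> lesssim join d (cvee meet join a b)
           \<longrightarrow> lesssim join d (meet a b))"
proof -
  interpret ado_algebra meet join
    by (rule ado_algebra.intro) (fact assms)
  show ?thesis
    using lesssim_meet_trans lesssim_meet_if_lesssim_cvee by blast
qed

end
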